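(* Let $L$ be a finite relational language and $\mathbb X,\mathbb Y$ be $L$-structures. (I) The following are equivalent: (a) $\mathbb X\preccurlyeq_c^{\mathrm{fin}}\mathbb Y$, i.e. there is a sequence $\langle\Pi_r:r<\omega\rangle$ of nonempty subsets of $\mathrm{PC}(\mathbb X,\mathbb Y)$ such that for every $r<\omega$: (f1) for all $f\in\Pi_{r+1}$ and $x\in X$ there is $g\in\Pi_r$ with $x\in\operatorname{dom}g$ and $f\subseteq g$, and (f2) for all $f\in\Pi_{r+1}$ and $y\in Y$ there is $g\in\Pi_r$ with $y\in\operatorname{ran}g$ and $f\subseteq g$; (b) for each $n\in\omega$, player II has a winning strategy in the game $G^{\preccurlyeq_c}_n(\mathbb X,\mathbb Y)$; (c) $\mathbb X\lll_{\mathcal P}\mathbb Y$; (d) $\mathbb Y\lll_{\mathcal N}\mathbb X$. (II) The following are equivalent: (a) $\mathbb X\preccurlyeq_c^{\mathrm{fin}}\mathbb Y$ and $\mathbb Y\preccurlyeq_c^{\mathrm{fin}}\mathbb X$; (b) for each $n\in\omega$, player II has winning strategies in both $G^{\preccurlyeq_c}_n(\mathbb X,\mathbb Y)$ and $G^{\preccurlyeq_c}_n(\mathbb Y,\mathbb X)$; (c) $\mathbb X\equiv_{\mathcal P}\mathbb Y$; (d) $\mathbb X\equiv_{\mathcal N}\mathbb Y$; (e) $\mathbb X\equiv_{\mathcal P\cup\mathcal N}\mathbb Y$; (f) $\mathbb X\lll_{\mathcal P\cup\mathcal N}\mathbb Y$.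
   Context: $L=\langle R_i:i\in I\rangle$ is a relational language, $R_i$ of arity $n_i$; for an $L$-structure $\mathbb X$ with domain $X$, $R_i^{\mathbb X}$ is the interpretation of $R_i$. For a map $f$ and tuple $\bar x=\langle x_0,\dots,x_{k-1}\rangle$ write $f\bar x=\langle f(x_0),\dots,f(x_{k-1})\rangle$. A partial condensation from $\mathbb X$ to $\mathbb Y$ is a bijection $f$ from a set $\operatorname{dom}f\subseteq X$ onto a set $\operatorname{ran}f\subseteq Y$ such that for all $i\in I$ and $\bar x\in(\operatorname{dom}f)^{n_i}$, $\bar x\in R_i^{\mathbb X}$ implies $f\bar x\in R_i^{\mathbb Y}$; $\mathrm{PC}(\mathbb X,\mathbb Y)$ is the set of these. For $n\in\omega$, the game $G^{\preccurlyeq_c}_n(\mathbb X,\mathbb Y)$ has $n$ steps $k<n$; at step $k$ player I either chooses $x_k\in X$ and then player II chooses $y_k\in Y$, or player I chooses $y_k\in Y$ and then II chooses $x_k\in X$. Player II wins iff $\{\langle x_k,y_k\rangle:k<n\}\in\mathrm{PC}(\mathbb X,\mathbb Y)$. A strategy for II determines its move from the previous moves and I's current choice; it is winning if II wins every play in which it is followed. Formula classes: $\mathcal P_0$ consists of all atomic formulas ($v_\alpha=v_\beta$, $R_i(v_{\alpha_1},\dots,v_{\alpha_{n_i}})$) and all $\neg\,v_\alpha=v_\beta$. $\mathcal N_0$ consists of all $\neg R_i(v_{\alpha_1},\dots,v_{\alpha_{n_i}})$, all $v_\alpha=v_\beta$ and all $\neg\,v_\alpha=v_\beta$. $\mathcal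 P$ (resp. $\mathcal N$), the $R$-positive (resp. $R$-negative) first order formulas, is the closure of $\mathcal P_0$ (resp. $\mathcal N_0$) under finite conjunctions, finite disjunctions, $\forall v$ and $\exists v$ (no negation). For a class $\mathcal F$ of formulas, $\mathbb X\lll_{\mathcal F}\mathbb Y$ means every sentence of $\mathcal F$ true in $\mathbb X$ is true in $\mathbb Y$, and $\mathbb X\equiv_{\mathcal F}\mathbb Y$ means they satisfy the same sentences of $\mathcal F$. *)

theory Defs
  imports Main
begin

text \<open>A relational language is given by a set I of relation symbols and an arity
function ar.\<close>

record ('a, 'i) lstr =
  univ :: "'a set"
  rels :: "'i \<Rightarrow> 'a list set"

definition is_struct :: "'i set \<Rightarrow> ('i \<Rightarrow> nat) \<Rightarrow> ('a, 'i) lstr \<Rightarrow> bool" where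
  "is_struct I ar M \<longleftrightarrow> univ M \<noteq> {} \<and>
     (\<forall>i\<in>I. rels M i \<subseteq> {xs. length xs = ar i \<and> set xs \<subseteq> univ M})"

text \<open>A partial map is represented by its graph, a set of pairs.\<close>

definition PC :: "'i set \<Rightarrow> ('a, 'i) lstr \<Rightarrow> ('b, 'i) lstr \<Rightarrow> ('a \<times> 'b) set set" where
  "PC I MX MY = {f.
     (\<forall>x y x' y'. (x, y) \<in> f \<longrightarrow> (x', y') \<in> f \<longrightarrow> (x = x' \<longleftrightarrow> y = y')) \<and>
     Domain f \<subseteq> univ MX \<and> Range f \<subseteq> univ MY \<and>
     (\<forall>i\<in>I. \<forall>xs ys. list_all2 (\<lambda>x y. (x, y) \<in> f) xs ys \<longrightarrow>
        xs \<in> rels MX i \<longrightarrow> ys \<in> rels MY i)}"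

definition cond_fin :: "'i set \<Rightarrow> ('a, 'i) lstr \<Rightarrow> ('b, 'i) lstr \<Rightarrow> bool" where
  "cond_fin I MX MY \<longleftrightarrow> (\<exists>\<Pi> :: nat \<Rightarrow> ('a \<times> 'b) set set.
     (\<forall>r. \<Pi> r \<noteq> {} \<and> \<Pi> r \<subseteq> PC I MX MY) \<and>
     (\<forall>r. \<forall>f\<in>\<Pi> (Suc r). \<forall>x\<in>univ MX. \<exists>g\<in>\<Pi> r. x \<in> Domain g \<and> f \<subseteq> g) \<and>
     (\<forall>r. \<forall>f\<in>\<Pi> (Suc r). \<forall>y\<in>univ MY. \<exists>g\<in>\<Pi> r. y \<in> Range g \<and> f \<subseteq> g))"

text \<open>A move of player I is Inl x (a choice x in X) or Inr y (a choice y in Y).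
A round of a play is recorded as ((x_k, y_k), b) where b is True iff I chose x_k.
A strategy for II maps the history of previous rounds and I's current choice to
II's answer, which must be an element of the other structure.\<close>

fun mk_round :: "'a + 'b \<Rightarrow> 'a + 'b \<Rightarrow> ('a \<times> 'b) \<times> bool" where
  "mk_round (Inl x) r = ((x, case r of Inr y \<Rightarrow> y | Inl _ \<Rightarrow> undefined), True)"
| "mk_round (Inr y) r = ((case r of Inl x \<Rightarrow> x | Inr _ \<Rightarrow> undefined, y), False)"

definition play ::
  "((('a \<times> 'b) \<times> bool) list \<Rightarrow> 'a + 'b \<Rightarrow> 'a + 'b) \<Rightarrow> ('a + 'b) list
     \<Rightarrow> (('a \<times> 'b) \<times> bool) list" where
  "play \<sigma> ms = foldl (\<lambda>h m. h @ [mk_round m (\<sigma> h m)]) [] ms"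

definition II_wins :: "'i set \<Rightarrow> nat \<Rightarrow> ('a, 'i) lstr \<Rightarrow> ('b, 'i) lstr \<Rightarrow> bool" where
  "II_wins I n MX MY \<longleftrightarrow> (\<exists>\<sigma>.
     (\<forall>h x. x \<in> univ MX \<longrightarrow> (\<exists>y\<in>univ MY. \<sigma> h (Inl x) = Inr y)) \<and>
     (\<forall>h y. y \<in> univ MY \<longrightarrow> (\<exists>x\<in>univ MX. \<sigma> h (Inr y) = Inl x)) \<and>
     (\<forall>ms. length ms = n \<longrightarrow> set ms \<subseteq> Inl ` univ MX \<union> Inr ` univ MY \<longrightarrow>
        set (map fst (play \<sigma> ms)) \<in> PC I MX MY))"

datatype 'i fm =
    Eq nat nat
  | Rel 'i "nat list"
  | Neg "'i fm"
  | Conj "'i fm" "'i fm"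
  | Disj "'i fm" "'i fm"
  | All nat "'i fm"
  | Ex nat "'i fm"

fun fv :: "'i fm \<Rightarrow> nat set" where
  "fv (Eq a b) = {a, b}"
| "fv (Rel i vs) = set vs"
| "fv (Neg \<phi>) = fv \<phi>"
| "fv (Conj \<phi> \<psi>) = fv \<phi> \<union> fv \<psi>"
| "fv (Disj \<phi> \<psi>) = fv \<phi> \<union> fv \<psi>"
| "fv (All v \<phi>) = fv \<phi> - {v}"
| "fv (Ex v \<phi>) = fv \<phi> - {v}"

fun sat :: "('a, 'i) lstr \<Rightarrow> (nat \<Rightarrow> 'a) \<Rightarrow> 'i fm \<Rightarrow> bool" where
  "sat M \<nu> (Eq a b) = (\<nu> a = \<nu> b)"
| "sat M \<nu> (Rel i vs) = (map \<nu> vs \<in> rels M i)"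
| "sat M \<nu> (Neg \<phi>) = (\<not> sat M \<nu> \<phi>)"
| "sat M \<nu> (Conj \<phi> \<psi>) = (sat M \<nu> \<phi> \<and> sat M \<nu> \<psi>)"
| "sat M \<nu> (Disj \<phi> \<psi>) = (sat M \<nu> \<phi> \<or> sat M \<nu> \<psi>)"
| "sat M \<nu> (All v \<phi>) = (\<forall>a\<in>univ M. sat M (\<nu>(v := a)) \<phi>)"
| "sat M \<nu> (Ex v \<phi>) = (\<exists>a\<in>univ M. sat M (\<nu>(v := a)) \<phi>)"

definition sentence :: "'i fm \<Rightarrow> bool" where
  "sentence \<phi> \<longleftrightarrow> fv \<phi> = {}"

definition models :: "('a, 'i) lstr \<Rightarrow> 'i fm \<Rightarrow> bool" where
  "models M \<phi> \<longleftrightarrow> (\<forall>\<nu>. (\<forall>v. \<nu> v \<in> univ M) \<longrightarrow> sat M \<nu> \<phi>)"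

inductive_set Pfm :: "'i set \<Rightarrow> ('i \<Rightarrow> nat) \<Rightarrow> 'i fm set" for I ar where
  P_eq: "Eq a b \<in> Pfm I ar"
| P_rel: "i \<in> I \<Longrightarrow> length vs = ar i \<Longrightarrow> Rel i vs \<in> Pfm I ar"
| P_neq: "Neg (Eq a b) \<in> Pfm I ar"
| P_conj: "\<phi> \<in> Pfm I ar \<Longrightarrow> \<psi> \<in> Pfm I ar \<Longrightarrow> Conj \<phi> \<psi> \<in> Pfm I ar"
| P_disj: "\<phi> \<in> Pfm I ar \<Longrightarrow> \<psi> \<in> Pfm I ar \<Longrightarrow> Disj \<phi> \<psi> \<in> Pfm I ar"
| P_all: "\<phi> \<in> Pfm I ar \<Longrightarrow> All v \<phi> \<in> Pfm I ar"
| P_ex: "\<phi> \<in> Pfm I ar \<Longrightarrow> Ex v \<phi> \<in> Pfm I ar"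

inductive_set Nfm :: "'i set \<Rightarrow> ('i \<Rightarrow> nat) \<Rightarrow> 'i fm set" for I ar where
  N_nrel: "i \<in> I \<Longrightarrow> length vs = ar i \<Longrightarrow> Neg (Rel i vs) \<in> Nfm I ar"
| N_eq: "Eq a b \<in> Nfm I ar"
| N_neq: "Neg (Eq a b) \<in> Nfm I ar"
| N_conj: "\<phi> \<in> Nfm I ar \<Longrightarrow> \<psi> \<in> Nfm I ar \<Longrightarrow> Conj \<phi> \<psi> \<in> Nfm I ar"
| N_disj: "\<phi> \<in> Nfm I ar \<Longrightarrow> \<psi> \<in> Nfm I ar \<Longrightarrow> Disj \<phi> \<psi> \<in> Nfm I ar"
| N_all: "\<phi> \<in> Nfm I ar \<Longrightarrow> All v \<phi> \<in> Nfm I ar"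
| N_ex: "\<phi> \<in> Nfm I ar \<Longrightarrow> Ex v \<phi> \<in> Nfm I ar"

definition lll :: "'i fm set \<Rightarrow> ('a, 'i) lstr \<Rightarrow> ('b, 'i) lstr \<Rightarrow> bool" where
  "lll F MX MY \<longleftrightarrow> (\<forall>\<phi>\<in>F. sentence \<phi> \<longrightarrow> models MX \<phi> \<longrightarrow> models MY \<phi>)"

definition equivF :: "'i fm set \<Rightarrow> ('a, 'i) lstr \<Rightarrow> ('b, 'i) lstr \<Rightarrow> bool" where
  "equivF F MX MY \<longleftrightarrow> (\<forall>\<phi>\<in>F. sentence \<phi> \<longrightarrow> (models MX \<phi> \<longleftrightarrow> models MY \<phi>))"

end

theory Submission
  imports Defs
begin

text \<open>
(a) to (b): player II keeps the partial condensation built so far inside an element of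
\<Pi> (n - k) after k rounds; conditions (f1) and (f2) supply every answer.
(b) to (c): partial condensations preserve atomic formulas and inequalities, so by
induction on the formula a winning strategy in the n-round game transfers every
R-positive sentence of quantifier rank at most n, each quantifier costing one round.
(c) to (a): since L is finite, a tuple of X has only finitely many R-positive Hintikka
formulas of each rank, so they are R-positive formulas themselves; the maps from tuples
of X to tuples of Y realising their r-th Hintikka formula form \<Pi> r.
(c) and (d) are equivalent because the De Morgan dual exchanges R-positive and
R-negative sentences, and part (II) is part (I) applied in both directions.
\<close>

lemma PC_subset:
  assumes "g \<in> PC I MX MY" and "f \<subseteq> g"
  shows "f \<in> PC I MX MY"
  unfolding PC_def
proof (intro CollectI conjI allI ballI impI)
  show "(x = x') = (y = y')" if "(x, y) \<in> f" "(x', y') \<in> f" for x y x' y'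
    using assms that unfolding PC_def by blast
  show "Domain f \<subseteq> univ MX" "Range f \<subseteq> univ MY"
    using assms unfolding PC_def by blast+
  show "ys \<in> rels MY i"
    if "i \<in> I" "list_all2 (\<lambda>x y. (x, y) \<in> f) xs ys" "xs \<in> rels MX i" for i xs ys
  proof -
    have "list_all2 (\<lambda>x y. (x, y) \<in> g) xs ys"
      using that(2) by (rule list_all2_mono) (use assms(2) in blast)
    with assms(1) that(1,3) show ?thesis unfolding PC_def by blast
  qed
qed

lemma PC_injective:
  "f \<in> PC I MX MY \<Longrightarrow> (x, y) \<in> f \<Longrightarrow> (x', y') \<in> f \<Longrightarrow> x = x' \<longleftrightarrow> y = y'"
  unfolding PC_def by simp

lemma PC_rels:
  "f \<in> PC I MX MY \<Longrightarrow> i \<in> I \<Longrightarrow> list_all2 (\<lambda>x y. (x, y) \<in> f) xs ys \<Longrightarrow>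
   xs \<in> rels MX i \<Longrightarrow> ys \<in> rels MY i"
  unfolding PC_def by simp

lemma PC_subset_univ: "f \<in> PC I MX MY \<Longrightarrow> f \<subseteq> univ MX \<times> univ MY"
  unfolding PC_def by (auto dest: DomainI RangeI)

lemma sat_cong: "(\<And>v. v \<in> fv \<phi> \<Longrightarrow> \<nu> v = \<nu>' v) \<Longrightarrow> sat M \<nu> \<phi> = sat M \<nu>' \<phi>"
proof (induction \<phi> arbitrary: \<nu> \<nu>')
  case (Rel i vs)
  then have "map \<nu> vs = map \<nu>' vs" by simp
  then show ?case by (simp only: sat.simps)
next
  case (Neg \<phi>)
  have "sat M \<nu> \<phi> = sat M \<nu>' \<phi>" by (rule Neg.IH) (use Neg.prems in simp)
  then show ?case by simp
next
  case (Conj \<phi> \<psi>)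
  have "sat M \<nu> \<phi> = sat M \<nu>' \<phi>" "sat M \<nu> \<psi> = sat M \<nu>' \<psi>"
    by (rule Conj.IH; use Conj.prems in simp)+
  then show ?case by simp
next
  case (Disj \<phi> \<psi>)
  have "sat M \<nu> \<phi> = sat M \<nu>' \<phi>" "sat M \<nu> \<psi> = sat M \<nu>' \<psi>"
    by (rule Disj.IH; use Disj.prems in simp)+
  then show ?case by simp
next
  case (All v \<phi>)
  have "sat M (\<nu>(v := a)) \<phi> = sat M (\<nu>'(v := a)) \<phi>" for a
    by (rule All.IH) (use All.prems in simp)
  then show ?case by simp
next
  case (Ex v \<phi>)
  have "sat M (\<nu>(v := a)) \<phi> = sat M (\<nu>'(v := a)) \<phi>" for a
    by (rule Ex.IH) (use Ex.prems in simp)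
  then show ?case by simp
qed simp

text \<open>Truth of a sentence may be tested under any assignment, even one leaving the domain.\<close>
lemma models_iff_sat:
  assumes "sentence \<phi>" and "univ M \<noteq> {}"
  shows "models M \<phi> \<longleftrightarrow> sat M \<nu> \<phi>"
proof -
  obtain a where a: "a \<in> univ M" using assms(2) by blast
  have eq: "sat M \<mu> \<phi> = sat M \<nu> \<phi>" for \<mu>
    by (rule sat_cong) (use assms(1) in \<open>simp add: sentence_def\<close>)
  have "sat M (\<lambda>_. a) \<phi>" if "models M \<phi>"
    using that a unfolding models_def by (auto dest: spec[of _ "\<lambda>_. a"])
  then show ?thesis
    unfolding models_def using eq by blast
qed

section \<open>Winning strategies preserve R-positive sentences\<close>

abbreviation moves :: "('a, 'i) lstr \<Rightarrow> ('b, 'i) lstr \<Rightarrow> ('a + 'b) set" where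
  "moves MX MY \<equiv> Inl ` univ MX \<union> Inr ` univ MY"

definition legal_strategy ::
  "('a, 'i) lstr \<Rightarrow> ('b, 'i) lstr \<Rightarrow> ((('a \<times> 'b) \<times> bool) list \<Rightarrow> 'a + 'b \<Rightarrow> 'a + 'b) \<Rightarrow> bool" where
  "legal_strategy MX MY \<sigma> \<longleftrightarrow>
     (\<forall>h x. x \<in> univ MX \<longrightarrow> (\<exists>y\<in>univ MY. \<sigma> h (Inl x) = Inr y)) \<and>
     (\<forall>h y. y \<in> univ MY \<longrightarrow> (\<exists>x\<in>univ MX. \<sigma> h (Inr y) = Inl x))"

lemma II_wins_iff:
  "II_wins I n MX MY \<longleftrightarrow> (\<exists>\<sigma>. legal_strategy MX MY \<sigma> \<and>
     (\<forall>ms. length ms = n \<longrightarrow> set ms \<subseteq> moves MX MY \<longrightarrow> set (map fst (play \<sigma> ms)) \<in> PC I MX MY))"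
  unfolding II_wins_def legal_strategy_def by blast

lemma play_Nil [simp]: "play \<sigma> [] = []"
  by (simp add: play_def)

lemma play_snoc [simp]: "play \<sigma> (ms @ [m]) = play \<sigma> ms @ [mk_round m (\<sigma> (play \<sigma> ms) m)]"
  by (simp add: play_def)

lemma play_prefix: "\<exists>t. play \<sigma> (ms @ ms') = play \<sigma> ms @ t"
proof (induction ms' rule: rev_induct)
  case (snoc m ms')
  then show ?case
    by (metis append.assoc play_snoc)
qed simp

lemma length_play [simp]: "length (play \<sigma> ms) = length ms"
  by (induction ms rule: rev_induct) auto

text \<open>Shorter plays are prefixes of plays of full length (pad with arbitrary moves).\<close>
lemma PC_short_play:
  assumes "univ MX \<noteq> {}"
    and wins: "\<forall>ms. length ms = n \<longrightarrow> set ms \<subseteq> moves MX MY \<longrightarrow> set (map fst (play \<sigma> ms)) \<in> PC I MX MY"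
    and "set ms \<subseteq> moves MX MY" and "length ms \<le> n"
  shows "set (map fst (play \<sigma> ms)) \<in> PC I MX MY"
proof -
  obtain x where x: "x \<in> univ MX" using assms(1) by blast
  let ?ms = "ms @ replicate (n - length ms) (Inl x)"
  have "length ?ms = n" "set ?ms \<subseteq> moves MX MY"
    using assms(3,4) x by auto
  then have "set (map fst (play \<sigma> ?ms)) \<in> PC I MX MY"
    using wins by blast
  moreover obtain t where "play \<sigma> ?ms = play \<sigma> ms @ t" using play_prefix by blast
  ultimately show ?thesis by (auto intro: PC_subset)
qed

fun qrank :: "'i fm \<Rightarrow> nat" where
  "qrank (Eq a b) = 0"
| "qrank (Rel i vs) = 0"
| "qrank (Neg \<phi>) = qrank \<phi>"
| "qrank (Conj \<phi> \<psi>) = max (qrank \<phi>) (qrank \<psi>)"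
| "qrank (Disj \<phi> \<psi>) = max (qrank \<phi>) (qrank \<psi>)"
| "qrank (All v \<phi>) = Suc (qrank \<phi>)"
| "qrank (Ex v \<phi>) = Suc (qrank \<phi>)"

lemma PC_preserves_qfree_Pfm:
  assumes f: "f \<in> PC I MX MY" and \<phi>: "\<phi> \<in> Pfm I ar" "qrank \<phi> = 0"
    and \<nu>: "\<forall>v\<in>fv \<phi>. (\<nu> v, \<nu>' v) \<in> f" and sat: "sat MX \<nu> \<phi>"
  shows "sat MY \<nu>' \<phi>"
  using \<phi> \<nu> sat
proof (induction rule: Pfm.induct)
  case (P_rel i vs)
  then have "list_all2 (\<lambda>x y. (x, y) \<in> f) (map \<nu> vs) (map \<nu>' vs)"
    by (auto simp: list_all2_conv_all_nth)
  with P_rel show ?case using PC_rels[OF f] by simp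
qed (use PC_injective[OF f] in auto)

text \<open>Player II, following a winning strategy for n rounds, can answer every
quantifier of a positive formula of rank at most the number of rounds left.\<close>
lemma Pfm_transfer_play:
  assumes "univ MX \<noteq> {}" and legal: "legal_strategy MX MY \<sigma>"
    and wins: "\<forall>ms. length ms = n \<longrightarrow> set ms \<subseteq> moves MX MY \<longrightarrow> set (map fst (play \<sigma> ms)) \<in> PC I MX MY"
  shows "\<phi> \<in> Pfm I ar \<Longrightarrow> set ms \<subseteq> moves MX MY \<Longrightarrow> length ms + qrank \<phi> \<le> n \<Longrightarrow>
    \<forall>v\<in>fv \<phi>. (\<nu> v, \<nu>' v) \<in> set (map fst (play \<sigma> ms)) \<Longrightarrow> sat MX \<nu> \<phi> \<Longrightarrow> sat MY \<nu>' \<phi>"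
proof (induction \<phi> arbitrary: ms \<nu> \<nu>' rule: Pfm.induct)
  case (P_conj \<phi> \<psi>)
  have "sat MY \<nu>' \<phi>" "sat MY \<nu>' \<psi>"
    by (rule P_conj.IH; use P_conj.prems in auto)+
  then show ?case by simp
next
  case (P_disj \<phi> \<psi>)
  then consider "sat MX \<nu> \<phi>" | "sat MX \<nu> \<psi>" by auto
  then show ?case
  proof cases
    case 1
    have "sat MY \<nu>' \<phi>" by (rule P_disj.IH(1)) (use P_disj.prems 1 in auto)
    then show ?thesis by simp
  next
    case 2
    have "sat MY \<nu>' \<psi>" by (rule P_disj.IH(2)) (use P_disj.prems 2 in auto)
    then show ?thesis by simp
  qed
next
  case (P_all \<phi> v)
  show ?case unfolding sat.simps
  proof
    fix b assume b: "b \<in> univ MY"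
    obtain a where a: "a \<in> univ MX" "\<sigma> (play \<sigma> ms) (Inr b) = Inl a"
      using legal b unfolding legal_strategy_def by blast
    have "sat MX (\<nu>(v := a)) \<phi>" using P_all.prems(4) a(1) by simp
    then show "sat MY (\<nu>'(v := b)) \<phi>"
      by (rule P_all.IH[of "ms @ [Inr b]", rotated -1]) (use P_all.prems a b in auto)
  qed
next
  case (P_ex \<phi> v)
  from P_ex.prems obtain a where a: "a \<in> univ MX" "sat MX (\<nu>(v := a)) \<phi>" by auto
  obtain b where b: "b \<in> univ MY" "\<sigma> (play \<sigma> ms) (Inl a) = Inr b"
    using legal a unfolding legal_strategy_def by blast
  have "sat MY (\<nu>'(v := b)) \<phi>"
    using a(2) by (rule P_ex.IH[of "ms @ [Inl a]", rotated -1]) (use P_ex.prems a b in auto)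
  with b show ?case by auto
qed (intro PC_preserves_qfree_Pfm[OF PC_short_play[OF assms(1) wins]] Pfm.intros; simp)+

lemma II_wins_imp_lll_Pfm:
  assumes "univ MX \<noteq> {}" and "\<forall>n. II_wins I n MX MY"
  shows "lll (Pfm I ar) MX MY"
  unfolding lll_def
proof (intro ballI impI)
  fix \<phi> assume \<phi>: "\<phi> \<in> Pfm I ar" "sentence \<phi>" and "models MX \<phi>"
  obtain \<sigma> where legal: "legal_strategy MX MY \<sigma>" and
    wins: "\<forall>ms. length ms = qrank \<phi> \<longrightarrow> set ms \<subseteq> moves MX MY \<longrightarrow> set (map fst (play \<sigma> ms)) \<in> PC I MX MY"
    using assms(2) unfolding II_wins_iff by blast
  have "sat MX (\<lambda>_. undefined) \<phi>"
    using \<open>models MX \<phi>\<close> models_iff_sat[OF \<phi>(2) assms(1)] by blast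
  then have "sat MY \<nu>' \<phi>" for \<nu>'
    by (rule Pfm_transfer_play[OF assms(1) legal wins \<phi>(1), of "[]", rotated -1])
      (use \<phi>(2) in \<open>auto simp: sentence_def\<close>)
  then show "models MY \<phi>" unfolding models_def by blast
qed

section \<open>Winning strategies from back-and-forth systems\<close>

fun covers :: "('a \<times> 'b) set \<Rightarrow> 'a + 'b \<Rightarrow> bool" where
  "covers g (Inl x) \<longleftrightarrow> x \<in> Domain g"
| "covers g (Inr y) \<longleftrightarrow> y \<in> Range g"

definition back_and_forth ::
  "'i set \<Rightarrow> ('a, 'i) lstr \<Rightarrow> ('b, 'i) lstr \<Rightarrow> (nat \<Rightarrow> ('a \<times> 'b) set set) \<Rightarrow> bool" where
  "back_and_forth I MX MY \<Pi> \<longleftrightarrow> (\<forall>r. \<Pi> r \<noteq> {} \<and> \<Pi> r \<subseteq> PC I MX MY) \<and>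
     (\<forall>r. \<forall>f\<in>\<Pi> (Suc r). \<forall>m\<in>moves MX MY. \<exists>g\<in>\<Pi> r. f \<subseteq> g \<and> covers g m)"

lemma cond_fin_iff_back_and_forth:
  fixes MX :: "('a, 'i) lstr" and MY :: "('b, 'i) lstr"
  shows "cond_fin I MX MY \<longleftrightarrow> (\<exists>\<Pi>. back_and_forth I MX MY \<Pi>)"
proof -
  have "(\<forall>m\<in>moves MX MY. \<exists>g\<in>\<Pi> r. f \<subseteq> g \<and> covers g m) \<longleftrightarrow>
    (\<forall>x\<in>univ MX. \<exists>g\<in>\<Pi> r. x \<in> Domain g \<and> f \<subseteq> g) \<and> (\<forall>y\<in>univ MY. \<exists>g\<in>\<Pi> r. y \<in> Range g \<and> f \<subseteq> g)"
    for \<Pi> :: "nat \<Rightarrow> ('a \<times> 'b) set set" and r f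
    by (simp add: ball_Un conj_commute)
  then show ?thesis
    unfolding cond_fin_def back_and_forth_def by (simp only: ball_conj_distrib all_conj_distrib)
qed

definition extend ::
  "(nat \<Rightarrow> ('a \<times> 'b) set set) \<Rightarrow> nat \<Rightarrow> ('a \<times> 'b) set \<Rightarrow> 'a + 'b \<Rightarrow> ('a \<times> 'b) set" where
  "extend \<Pi> k f m = (SOME g. g \<in> \<Pi> k \<and> f \<subseteq> g \<and> covers g m)"

lemma extend_spec:
  assumes "back_and_forth I MX MY \<Pi>" and "f \<in> \<Pi> (Suc k)" and "m \<in> moves MX MY"
  shows "extend \<Pi> k f m \<in> \<Pi> k" "f \<subseteq> extend \<Pi> k f m" "covers (extend \<Pi> k f m) m"
proof -
  have "\<exists>g. g \<in> \<Pi> k \<and> f \<subseteq> g \<and> covers g m"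
    using assms unfolding back_and_forth_def by blast
  then show "extend \<Pi> k f m \<in> \<Pi> k" "f \<subseteq> extend \<Pi> k f m" "covers (extend \<Pi> k f m) m"
    unfolding extend_def by (metis (mono_tags, lifting) someI_ex)+
qed

text \<open>II answers with a partner of I's move in g; the fallback only matters when g
does not cover the move, and keeps the answer inside the domain.\<close>
fun respond :: "('a, 'i) lstr \<Rightarrow> ('b, 'i) lstr \<Rightarrow> ('a \<times> 'b) set \<Rightarrow> 'a + 'b \<Rightarrow> 'a + 'b" where
  "respond MX MY g (Inl x) =
     Inr (SOME y. y \<in> univ MY \<and> ((x, y) \<in> g \<or> (\<forall>y'\<in>univ MY. (x, y') \<notin> g)))"
| "respond MX MY g (Inr y) =
     Inl (SOME x. x \<in> univ MX \<and> ((x, y) \<in> g \<or> (\<forall>x'\<in>univ MX. (x', y) \<notin> g)))"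

lemma legal_strategy_respond:
  assumes "univ MX \<noteq> {}" and "univ MY \<noteq> {}"
  shows "legal_strategy MX MY (\<lambda>h m. respond MX MY (G h m) m)"
  unfolding legal_strategy_def
proof (intro conjI allI impI)
  fix h x
  let ?P = "\<lambda>y. y \<in> univ MY \<and> ((x, y) \<in> G h (Inl x) \<or> (\<forall>y'\<in>univ MY. (x, y') \<notin> G h (Inl x)))"
  have "?P (SOME y. ?P y)" by (rule someI_ex) (use assms(2) in blast)
  then show "\<exists>y\<in>univ MY. respond MX MY (G h (Inl x)) (Inl x) = Inr y" by auto
next
  fix h y
  let ?P = "\<lambda>x. x \<in> univ MX \<and> ((x, y) \<in> G h (Inr y) \<or> (\<forall>x'\<in>univ MX. (x', y) \<notin> G h (Inr y)))"
  have "?P (SOME x. ?P x)" by (rule someI_ex) (use assms(1) in blast)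
  then show "\<exists>x\<in>univ MX. respond MX MY (G h (Inr y)) (Inr y) = Inl x" by auto
qed

lemma respond_in_graph:
  assumes "g \<subseteq> univ MX \<times> univ MY" and "covers g m"
  shows "fst (mk_round m (respond MX MY g m)) \<in> g"
proof (cases m)
  case (Inl x)
  let ?P = "\<lambda>y. y \<in> univ MY \<and> ((x, y) \<in> g \<or> (\<forall>y'\<in>univ MY. (x, y') \<notin> g))"
  obtain y where y: "(x, y) \<in> g" "y \<in> univ MY" using assms Inl by auto
  then have "?P y" by blast
  then have "?P (SOME y. ?P y)" by (rule someI)
  then show ?thesis using Inl y by auto
next
  case (Inr y)
  let ?P = "\<lambda>x. x \<in> univ MX \<and> ((x, y) \<in> g \<or> (\<forall>x'\<in>univ MX. (x', y) \<notin> g))"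
  obtain x where x: "(x, y) \<in> g" "x \<in> univ MX" using assms Inr by auto
  then have "?P x" by blast
  then have "?P (SOME x. ?P x)" by (rule someI)
  then show ?thesis using Inr x by auto
qed

fun move_of :: "('a \<times> 'b) \<times> bool \<Rightarrow> 'a + 'b" where
  "move_of ((x, y), b) = (if b then Inl x else Inr y)"

lemma move_of_mk_round [simp]: "move_of (mk_round m r) = m"
  by (cases m) auto

text \<open>The element of \<Pi> that II has committed to after the history h, when the
play started from f with k rounds to go.\<close>
primrec track ::
  "(nat \<Rightarrow> ('a \<times> 'b) set set) \<Rightarrow> nat \<Rightarrow> ('a \<times> 'b) set \<Rightarrow> (('a \<times> 'b) \<times> bool) list \<Rightarrow> ('a \<times> 'b) set" where
  "track \<Pi> k f [] = f"
| "track \<Pi> k f (r # h) = track \<Pi> (k - 1) (extend \<Pi> (k - 1) f (move_of r)) h"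

lemma track_snoc:
  "track \<Pi> k f (h @ [r]) = extend \<Pi> (k - length h - 1) (track \<Pi> k f h) (move_of r)"
  by (induction h arbitrary: k f) (simp_all add: diff_diff_add)

definition bf_strategy ::
  "('a, 'i) lstr \<Rightarrow> ('b, 'i) lstr \<Rightarrow> (nat \<Rightarrow> ('a \<times> 'b) set set) \<Rightarrow> nat \<Rightarrow> ('a \<times> 'b) set
     \<Rightarrow> (('a \<times> 'b) \<times> bool) list \<Rightarrow> 'a + 'b \<Rightarrow> 'a + 'b" where
  "bf_strategy MX MY \<Pi> n f0 h m = respond MX MY (extend \<Pi> (n - length h - 1) (track \<Pi> n f0 h) m) m"

lemma bf_strategy_invariant:
  assumes bf: "back_and_forth I MX MY \<Pi>" and "f0 \<in> \<Pi> n"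
    and "set ms \<subseteq> moves MX MY" and "length ms \<le> n"
  defines "\<sigma> \<equiv> bf_strategy MX MY \<Pi> n f0"
  shows "track \<Pi> n f0 (play \<sigma> ms) \<in> \<Pi> (n - length ms) \<and>
         set (map fst (play \<sigma> ms)) \<subseteq> track \<Pi> n f0 (play \<sigma> ms)"
  using assms(3,4)
proof (induction ms rule: rev_induct)
  case Nil
  then show ?case using assms(2) by simp
next
  case (snoc m ms)
  let ?h = "play \<sigma> ms"
  obtain k where k: "n - length ms = Suc k" using snoc.prems(2) by (cases "n - length ms") auto
  then have k': "n - Suc (length ms) = k" by simp
  let ?g = "extend \<Pi> k (track \<Pi> n f0 ?h) m"
  have "set ms \<subseteq> moves MX MY" "length ms \<le> n" using snoc.prems by auto
  with snoc.IH have IH: "track \<Pi> n f0 ?h \<in> \<Pi> (Suc k)" "set (map fst ?h) \<subseteq> track \<Pi> n f0 ?h"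
    unfolding k by auto
  have m: "m \<in> moves MX MY" using snoc.prems(1) by simp
  note g = extend_spec[OF bf IH(1) m]
  have "?g \<in> PC I MX MY"
    using g(1) bf unfolding back_and_forth_def by blast
  moreover have "\<sigma> ?h m = respond MX MY ?g m"
    unfolding \<sigma>_def bf_strategy_def using k' by simp
  ultimately have "fst (mk_round m (\<sigma> ?h m)) \<in> ?g"
    using respond_in_graph[OF PC_subset_univ g(3)] by simp
  moreover have "track \<Pi> n f0 (play \<sigma> (ms @ [m])) = ?g"
    using k' by (simp add: track_snoc)
  ultimately show ?case
    using g(1,2) IH(2) k' by auto
qed

lemma back_and_forth_imp_II_wins:
  assumes "univ MX \<noteq> {}" and "univ MY \<noteq> {}" and bf: "back_and_forth I MX MY \<Pi>"
  shows "II_wins I n MX MY"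
proof -
  obtain f0 where f0: "f0 \<in> \<Pi> n" using bf unfolding back_and_forth_def by blast
  let ?\<sigma> = "bf_strategy MX MY \<Pi> n f0"
  have "legal_strategy MX MY ?\<sigma>"
    unfolding bf_strategy_def using assms(1,2) by (rule legal_strategy_respond)
  moreover have "set (map fst (play ?\<sigma> ms)) \<in> PC I MX MY"
    if "length ms = n" "set ms \<subseteq> moves MX MY" for ms
  proof -
    have "track \<Pi> n f0 (play ?\<sigma> ms) \<in> \<Pi> 0"
      and "set (map fst (play ?\<sigma> ms)) \<subseteq> track \<Pi> n f0 (play ?\<sigma> ms)"
      using bf_strategy_invariant[OF bf f0 that(2)] that(1) by auto
    then show ?thesis
      using bf unfolding back_and_forth_def by (blast intro: PC_subset)
  qed
  ultimately show ?thesis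
    unfolding II_wins_iff by blast
qed

section \<open>R-positive Hintikka formulas\<close>

definition list_of :: "'x set \<Rightarrow> 'x list" where
  "list_of S = (SOME xs. set xs \<subseteq> S \<and> (finite S \<longrightarrow> set xs = S))"

lemma set_list_of: "set (list_of S) \<subseteq> S" "finite S \<Longrightarrow> set (list_of S) = S"
proof -
  have "\<exists>xs. set xs \<subseteq> S \<and> (finite S \<longrightarrow> set xs = S)"
  proof (cases "finite S")
    case True
    then show ?thesis using finite_list by blast
  next
    case False
    then show ?thesis by (intro exI[of _ "[]"]) simp
  qed
  then have "set (list_of S) \<subseteq> S \<and> (finite S \<longrightarrow> set (list_of S) = S)"
    unfolding list_of_def by (rule someI_ex)
  then show "set (list_of S) \<subseteq> S" "finite S \<Longrightarrow> set (list_of S) = S" by blast+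
qed

text \<open>The empty conjunction and disjunction are sentences of rank one, since
P-formulas have no truth constants.\<close>
fun conj_list :: "'i fm list \<Rightarrow> 'i fm" where
  "conj_list [] = All 0 (Eq 0 0)"
| "conj_list (\<phi> # \<phi>s) = Conj \<phi> (conj_list \<phi>s)"

fun disj_list :: "'i fm list \<Rightarrow> 'i fm" where
  "disj_list [] = Ex 0 (Neg (Eq 0 0))"
| "disj_list (\<phi> # \<phi>s) = Disj \<phi> (disj_list \<phi>s)"

lemma sat_conj_list [simp]: "sat M \<nu> (conj_list \<phi>s) \<longleftrightarrow> (\<forall>\<phi>\<in>set \<phi>s. sat M \<nu> \<phi>)"
  by (induction \<phi>s) auto

lemma sat_disj_list [simp]: "sat M \<nu> (disj_list \<phi>s) \<longleftrightarrow> (\<exists>\<phi>\<in>set \<phi>s. sat M \<nu> \<phi>)"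
  by (induction \<phi>s) auto

lemma fv_conj_list [simp]: "fv (conj_list \<phi>s) = (\<Union>\<phi>\<in>set \<phi>s. fv \<phi>)"
  by (induction \<phi>s) auto

lemma fv_disj_list [simp]: "fv (disj_list \<phi>s) = (\<Union>\<phi>\<in>set \<phi>s. fv \<phi>)"
  by (induction \<phi>s) auto

lemma conj_list_Pfm: "set \<phi>s \<subseteq> Pfm I ar \<Longrightarrow> conj_list \<phi>s \<in> Pfm I ar"
  by (induction \<phi>s) (auto intro: Pfm.intros)

lemma disj_list_Pfm: "set \<phi>s \<subseteq> Pfm I ar \<Longrightarrow> disj_list \<phi>s \<in> Pfm I ar"
  by (induction \<phi>s) (auto intro: Pfm.intros)

text \<open>The positive diagram of a tuple: the P_0 formulas in the variables below its
length that it satisfies, variable j standing for its j-th entry.\<close>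
definition literals :: "'i set \<Rightarrow> ('i \<Rightarrow> nat) \<Rightarrow> ('a, 'i) lstr \<Rightarrow> 'a list \<Rightarrow> 'i fm set" where
  "literals I ar M as =
     {Rel i vs | i vs. i \<in> I \<and> length vs = ar i \<and> set vs \<subseteq> {..<length as} \<and>
        map ((!) as) vs \<in> rels M i}
   \<union> {Eq j l | j l. j < length as \<and> l < length as \<and> as ! j = as ! l}
   \<union> {Neg (Eq j l) | j l. j < length as \<and> l < length as \<and> as ! j \<noteq> as ! l}"

definition literals_bound :: "'i set \<Rightarrow> ('i \<Rightarrow> nat) \<Rightarrow> nat \<Rightarrow> 'i fm set" where
  "literals_bound I ar k =
     {Rel i vs | i vs. i \<in> I \<and> length vs = ar i \<and> set vs \<subseteq> {..<k}}
   \<union> {Eq j l | j l. j < k \<and> l < k}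
   \<union> {Neg (Eq j l) | j l. j < k \<and> l < k}"

lemma literals_subset_bound: "literals I ar M as \<subseteq> literals_bound I ar (length as)"
  unfolding literals_def literals_bound_def by blast

lemma finite_literals_bound:
  assumes "finite I"
  shows "finite (literals_bound I ar k)"
proof -
  have "finite (SIGMA i:I. {vs. set vs \<subseteq> {..<k} \<and> length vs = ar i})"
    using assms by (intro finite_SigmaI finite_lists_length_eq) auto
  then have "finite {Rel i vs | i vs. i \<in> I \<and> length vs = ar i \<and> set vs \<subseteq> {..<k}}"
    by (rule finite_subset[rotated, OF finite_imageI[where h = "\<lambda>(i, vs). Rel i vs"]]) auto
  moreover have "finite {Eq j l | j l. j < k \<and> l < k}"
    by (rule finite_subset[of _ "(\<lambda>(j, l). Eq j l) ` ({..<k} \<times> {..<k})"]) auto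
  moreover have "finite {Neg (Eq j l) | j l. j < k \<and> l < k}"
    by (rule finite_subset[of _ "(\<lambda>(j, l). Neg (Eq j l)) ` ({..<k} \<times> {..<k})"]) auto
  ultimately show ?thesis
    unfolding literals_bound_def by blast
qed

lemma finite_literals: "finite I \<Longrightarrow> finite (literals I ar M as)"
  using finite_subset[OF literals_subset_bound finite_literals_bound] .

definition diagram :: "'i set \<Rightarrow> ('i \<Rightarrow> nat) \<Rightarrow> ('a, 'i) lstr \<Rightarrow> 'a list \<Rightarrow> 'i fm" where
  "diagram I ar M as = conj_list (list_of (literals I ar M as))"

definition hintikka_step :: "nat \<Rightarrow> 'i fm \<Rightarrow> 'i fm set \<Rightarrow> 'i fm" where
  "hintikka_step k \<delta> U =
     Conj \<delta> (Conj (All k (disj_list (list_of U))) (conj_list (map (Ex k) (list_of U))))"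

text \<open>The r-th Hintikka formula of a tuple describes, up to P-formulas of rank r,
which extensions the tuple has; variable length as is the one quantified next.\<close>
primrec hintikka :: "'i set \<Rightarrow> ('i \<Rightarrow> nat) \<Rightarrow> ('a, 'i) lstr \<Rightarrow> nat \<Rightarrow> 'a list \<Rightarrow> 'i fm" where
  "hintikka I ar M 0 as = diagram I ar M as"
| "hintikka I ar M (Suc r) as = hintikka_step (length as) (diagram I ar M as)
     ((\<lambda>c. hintikka I ar M r (as @ [c])) ` univ M)"

lemma hintikka_extensions_subset:
  assumes "set as \<subseteq> univ M"
  shows "(\<lambda>c. hintikka I ar M r (as @ [c])) ` univ M
    \<subseteq> {hintikka I ar M r bs | bs. length bs = Suc (length as) \<and> set bs \<subseteq> univ M}"
proof (intro subsetI, elim imageE)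
  fix \<phi> c assume "c \<in> univ M" and "\<phi> = hintikka I ar M r (as @ [c])"
  then show "\<phi> \<in> {hintikka I ar M r bs | bs. length bs = Suc (length as) \<and> set bs \<subseteq> univ M}"
    by (intro CollectI exI[of _ "as @ [c]"]) (use assms in auto)
qed

lemma finite_hintikka:
  assumes "finite I"
  shows "finite {hintikka I ar M r as | as. length as = k \<and> set as \<subseteq> univ M}"
proof (induction r arbitrary: k)
  case 0
  have "{hintikka I ar M 0 as | as. length as = k \<and> set as \<subseteq> univ M}
      \<subseteq> (\<lambda>S. conj_list (list_of S)) ` Pow (literals_bound I ar k)"
    using literals_subset_bound by (fastforce simp: diagram_def)
  then show ?case
    using finite_literals_bound[OF assms] by (meson finite_Pow_iff finite_imageI finite_subset)
next
  case (Suc r)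
  let ?T = "{hintikka I ar M r as | as. length as = Suc k \<and> set as \<subseteq> univ M}"
  let ?D = "(\<lambda>S. conj_list (list_of S)) ` Pow (literals_bound I ar k)"
  have "{hintikka I ar M (Suc r) as | as. length as = k \<and> set as \<subseteq> univ M}
      \<subseteq> (\<lambda>(\<delta>, U). hintikka_step k \<delta> U) ` (?D \<times> Pow ?T)"
  proof (rule subsetI, elim CollectE exE conjE)
    fix \<phi> as assume \<phi>: "\<phi> = hintikka I ar M (Suc r) as" and as: "length as = k" "set as \<subseteq> univ M"
    have "(\<lambda>c. hintikka I ar M r (as @ [c])) ` univ M \<subseteq> ?T"
      using hintikka_extensions_subset[OF as(2)] as(1) by simp
    moreover have "diagram I ar M as \<in> ?D"
      unfolding diagram_def using literals_subset_bound as(1) by blast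
    ultimately show "\<phi> \<in> (\<lambda>(\<delta>, U). hintikka_step k \<delta> U) ` (?D \<times> Pow ?T)"
      using \<phi> as(1) by force
  qed
  moreover have "finite (?D \<times> Pow ?T)"
    using Suc finite_literals_bound[OF assms] by blast
  ultimately show ?case by (meson finite_imageI finite_subset)
qed

lemma finite_hintikka_extensions:
  assumes "finite I" and "set as \<subseteq> univ M"
  shows "finite ((\<lambda>c. hintikka I ar M r (as @ [c])) ` univ M)"
  using hintikka_extensions_subset[OF assms(2)] finite_hintikka[OF assms(1)] by (rule finite_subset)

lemma diagram_Pfm: "diagram I ar M as \<in> Pfm I ar"
  unfolding diagram_def
  by (rule conj_list_Pfm)
    (use set_list_of(1)[of "literals I ar M as"] in \<open>auto simp: literals_def intro: Pfm.intros\<close>)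

lemma hintikka_Pfm: "hintikka I ar M r as \<in> Pfm I ar"
proof (induction r arbitrary: as)
  case 0
  then show ?case by (simp add: diagram_Pfm)
next
  case (Suc r)
  let ?U = "(\<lambda>c. hintikka I ar M r (as @ [c])) ` univ M"
  have "set (list_of ?U) \<subseteq> Pfm I ar" using set_list_of(1)[of ?U] Suc by blast
  then show ?case
    unfolding hintikka.simps hintikka_step_def
    by (auto intro!: Pfm.intros conj_list_Pfm disj_list_Pfm diagram_Pfm)
qed

lemma fv_diagram: "fv (diagram I ar M as) \<subseteq> {..<length as}"
proof -
  have "fv \<phi> \<subseteq> {..<length as}" if "\<phi> \<in> literals I ar M as" for \<phi>
    using that unfolding literals_def by auto
  then show ?thesis
    unfolding diagram_def using set_list_of(1)[of "literals I ar M as"] by auto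
qed

lemma fv_hintikka: "fv (hintikka I ar M r as) \<subseteq> {..<length as}"
proof (induction r arbitrary: as)
  case 0
  then show ?case by (simp add: fv_diagram)
next
  case (Suc r)
  let ?U = "(\<lambda>c. hintikka I ar M r (as @ [c])) ` univ M"
  have "fv \<phi> \<subseteq> {..<Suc (length as)}" if "\<phi> \<in> set (list_of ?U)" for \<phi>
    using that set_list_of(1)[of ?U] Suc by fastforce
  then show ?case
    unfolding hintikka.simps hintikka_step_def
    using fv_diagram[of I ar M as] by (fastforce simp: less_Suc_eq)
qed

lemma sat_diagram:
  assumes "\<forall>j<length as. \<nu> j = as ! j"
  shows "sat M \<nu> (diagram I ar M as)"
  unfolding diagram_def sat_conj_list
proof
  fix \<phi> assume "\<phi> \<in> set (list_of (literals I ar M as))"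
  then have "\<phi> \<in> literals I ar M as" using set_list_of(1)[of "literals I ar M as"] by blast
  then consider (R) i vs where "\<phi> = Rel i vs" "set vs \<subseteq> {..<length as}" "map ((!) as) vs \<in> rels M i"
    | (E) j l where "\<phi> = Eq j l" "j < length as" "l < length as" "as ! j = as ! l"
    | (N) j l where "\<phi> = Neg (Eq j l)" "j < length as" "l < length as" "as ! j \<noteq> as ! l"
    unfolding literals_def by blast
  then show "sat M \<nu> \<phi>"
  proof cases
    case R
    have "\<forall>x\<in>set vs. \<nu> x = as ! x" using R(2) assms by auto
    then have "map \<nu> vs = map ((!) as) vs" by simp
    with R(3) show ?thesis unfolding R(1) sat.simps by (simp only:)
  next
    case E
    then show ?thesis using assms by simp
  next
    case N
    then show ?thesis using assms by simp
  qed
qed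

lemma sat_hintikka_Suc:
  assumes "finite I" and "set as \<subseteq> univ M"
  shows "sat M' \<nu> (hintikka I ar M (Suc r) as) \<longleftrightarrow> sat M' \<nu> (diagram I ar M as) \<and>
    (\<forall>d\<in>univ M'. \<exists>c\<in>univ M. sat M' (\<nu>(length as := d)) (hintikka I ar M r (as @ [c]))) \<and>
    (\<forall>c\<in>univ M. \<exists>d\<in>univ M'. sat M' (\<nu>(length as := d)) (hintikka I ar M r (as @ [c])))"
proof -
  let ?U = "(\<lambda>c. hintikka I ar M r (as @ [c])) ` univ M"
  have "set (list_of ?U) = ?U"
    using set_list_of(2)[OF finite_hintikka_extensions[OF assms]] .
  then show ?thesis
    unfolding hintikka.simps hintikka_step_def by auto
qed

lemma sat_hintikka:
  assumes "finite I" and "set as \<subseteq> univ M" and "\<forall>j<length as. \<nu> j = as ! j"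
  shows "sat M \<nu> (hintikka I ar M r as)"
  using assms(2,3)
proof (induction r arbitrary: as \<nu>)
  case 0
  then show ?case by (simp add: sat_diagram)
next
  case (Suc r)
  have "sat M (\<nu>(length as := c)) (hintikka I ar M r (as @ [c]))" if "c \<in> univ M" for c
    by (rule Suc.IH) (use Suc.prems that in \<open>auto simp: nth_append less_Suc_eq\<close>)
  then show ?case
    using sat_diagram[OF Suc.prems(2)] sat_hintikka_Suc[OF assms(1) Suc.prems(1)] by blast
qed

lemma sat_hintikka_imp_diagram: "sat M' \<nu> (hintikka I ar M r as) \<Longrightarrow> sat M' \<nu> (diagram I ar M as)"
  by (cases r) (auto simp: hintikka_step_def)

lemma zip_PC_if_sat_diagram:
  assumes "is_struct I ar MX" and "finite I" and len: "length as = length bs"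
    and "set as \<subseteq> univ MX" and "set bs \<subseteq> univ MY"
    and sat: "sat MY ((!) bs) (diagram I ar MX as)"
  shows "set (zip as bs) \<in> PC I MX MY"
  unfolding PC_def
proof (intro CollectI conjI allI ballI impI)
  have lit: "sat MY ((!) bs) \<phi>" if "\<phi> \<in> literals I ar MX as" for \<phi>
    using sat that set_list_of(2)[OF finite_literals[OF assms(2)]]
    unfolding diagram_def sat_conj_list by blast
  have zip: "(x, y) \<in> set (zip as bs) \<longleftrightarrow> (\<exists>j<length as. x = as ! j \<and> y = bs ! j)" for x y
    using len by (auto simp: set_zip)
  show "(x = x') = (y = y')" if xy: "(x, y) \<in> set (zip as bs)" "(x', y') \<in> set (zip as bs)"
    for x y x' y'
  proof -
    obtain j l where jl: "j < length as" "l < length as"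
      "x = as ! j" "y = bs ! j" "x' = as ! l" "y' = bs ! l"
      using xy unfolding zip by blast
    show ?thesis
    proof (cases "as ! j = as ! l")
      case True
      then have "Eq j l \<in> literals I ar MX as" using jl by (simp add: literals_def)
      then show ?thesis using lit jl True by fastforce
    next
      case False
      then have "Neg (Eq j l) \<in> literals I ar MX as" using jl by (simp add: literals_def)
      then show ?thesis using lit jl False by fastforce
    qed
  qed
  show "Domain (set (zip as bs)) \<subseteq> univ MX" "Range (set (zip as bs)) \<subseteq> univ MY"
    using assms(4,5) by (auto dest: set_zip_leftD set_zip_rightD)
  show "ys \<in> rels MY i"
    if i: "i \<in> I" and xys: "list_all2 (\<lambda>x y. (x, y) \<in> set (zip as bs)) xs ys"
      and xs: "xs \<in> rels MX i"
    for i xs ys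
  proof -
    have "\<forall>p<length xs. \<exists>j. j < length as \<and> xs ! p = as ! j \<and> ys ! p = bs ! j"
      using xys zip unfolding list_all2_conv_all_nth by blast
    then obtain J where J: "\<forall>p<length xs. J p < length as \<and> xs ! p = as ! J p \<and> ys ! p = bs ! J p"
      by metis
    define vs where "vs = map J [0..<length xs]"
    have "length ys = length xs" using xys by (simp add: list_all2_lengthD)
    then have vs: "map ((!) as) vs = xs" "map ((!) bs) vs = ys" "set vs \<subseteq> {..<length as}"
      unfolding vs_def using J by (auto intro: nth_equalityI)
    have "length xs = ar i" using assms(1) i xs unfolding is_struct_def by blast
    then have "Rel i vs \<in> literals I ar MX as"
      unfolding literals_def using i vs xs by (auto simp: vs_def)
    then show ?thesis using lit vs(2) by fastforce
  qed
qed

definition realizes_hintikka ::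
  "'i set \<Rightarrow> ('i \<Rightarrow> nat) \<Rightarrow> ('a, 'i) lstr \<Rightarrow> ('b, 'i) lstr \<Rightarrow> nat \<Rightarrow> 'a list \<Rightarrow> 'b list \<Rightarrow> bool" where
  "realizes_hintikka I ar MX MY r as bs \<longleftrightarrow> length as = length bs \<and>
     set as \<subseteq> univ MX \<and> set bs \<subseteq> univ MY \<and> sat MY ((!) bs) (hintikka I ar MX r as)"

lemma realizes_hintikka_Nil:
  assumes "lll (Pfm I ar) MX MY" and "finite I" and "univ MY \<noteq> {}"
  shows "realizes_hintikka I ar MX MY r [] []"
proof -
  have sentence: "sentence (hintikka I ar MX r [])"
    unfolding sentence_def using fv_hintikka[of I ar MX r "[]"] by simp
  have "models MX (hintikka I ar MX r [])"
    unfolding models_def by (simp add: sat_hintikka[OF assms(2)])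
  then have "models MY (hintikka I ar MX r [])"
    using assms(1) hintikka_Pfm sentence unfolding lll_def by blast
  then show ?thesis
    unfolding realizes_hintikka_def using models_iff_sat[OF sentence assms(3)] by simp
qed

lemma realizes_hintikka_PC:
  assumes "is_struct I ar MX" and "finite I" and "realizes_hintikka I ar MX MY r as bs"
  shows "set (zip as bs) \<in> PC I MX MY"
  using assms(3) unfolding realizes_hintikka_def
  by (metis zip_PC_if_sat_diagram[OF assms(1,2)] sat_hintikka_imp_diagram)

lemma realizes_hintikka_snoc:
  assumes "realizes_hintikka I ar MX MY r as bs" and "c \<in> univ MX" and "d \<in> univ MY"
    and sat: "sat MY (((!) bs)(length bs := d)) (hintikka I ar MX r' (as @ [c]))"
  shows "realizes_hintikka I ar MX MY r' (as @ [c]) (bs @ [d])"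
proof -
  have "(((!) bs)(length bs := d)) j = (bs @ [d]) ! j"
    if "j \<in> fv (hintikka I ar MX r' (as @ [c]))" for j
    using that fv_hintikka assms(1) unfolding realizes_hintikka_def
    by (fastforce simp: nth_append less_Suc_eq)
  then have "sat MY ((!) (bs @ [d])) (hintikka I ar MX r' (as @ [c]))"
    using sat sat_cong by blast
  with assms(1-3) show ?thesis
    unfolding realizes_hintikka_def by simp
qed

lemma realizes_hintikka_extend:
  assumes "finite I" and "realizes_hintikka I ar MX MY (Suc r) as bs"
  shows "\<forall>c\<in>univ MX. \<exists>d\<in>univ MY. realizes_hintikka I ar MX MY r (as @ [c]) (bs @ [d])"
    and "\<forall>d\<in>univ MY. \<exists>c\<in>univ MX. realizes_hintikka I ar MX MY r (as @ [c]) (bs @ [d])"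
proof -
  have len: "length as = length bs" and "set as \<subseteq> univ MX"
    and sat: "sat MY ((!) bs) (hintikka I ar MX (Suc r) as)"
    using assms(2) unfolding realizes_hintikka_def by auto
  have step:
    "\<forall>c\<in>univ MX. \<exists>d\<in>univ MY. sat MY (((!) bs)(length bs := d)) (hintikka I ar MX r (as @ [c]))"
    "\<forall>d\<in>univ MY. \<exists>c\<in>univ MX. sat MY (((!) bs)(length bs := d)) (hintikka I ar MX r (as @ [c]))"
    using sat unfolding sat_hintikka_Suc[OF assms(1) \<open>set as \<subseteq> univ MX\<close>] len by blast+
  show "\<forall>c\<in>univ MX. \<exists>d\<in>univ MY. realizes_hintikka I ar MX MY r (as @ [c]) (bs @ [d])"
    using step realizes_hintikka_snoc[OF assms(2)] by blast
  show "\<forall>d\<in>univ MY. \<exists>c\<in>univ MX. realizes_hintikka I ar MX MY r (as @ [c]) (bs @ [d])"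
    using step realizes_hintikka_snoc[OF assms(2)] by blast
qed

lemma lll_Pfm_imp_back_and_forth:
  assumes "finite I" and "is_struct I ar MX" and "univ MY \<noteq> {}" and "lll (Pfm I ar) MX MY"
  shows "back_and_forth I MX MY
    (\<lambda>r. {set (zip as bs) | as bs. realizes_hintikka I ar MX MY r as bs})"
  unfolding back_and_forth_def
proof (intro conjI allI ballI)
  fix r
  show "{set (zip as bs) | as bs. realizes_hintikka I ar MX MY r as bs} \<noteq> {}"
    using realizes_hintikka_Nil[OF assms(4,1,3)] by blast
  show "{set (zip as bs) | as bs. realizes_hintikka I ar MX MY r as bs} \<subseteq> PC I MX MY"
    using realizes_hintikka_PC[OF assms(2,1)] by blast
next
  fix r f m
  assume f: "f \<in> {set (zip as bs) | as bs. realizes_hintikka I ar MX MY (Suc r) as bs}"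
    and m: "m \<in> moves MX MY"
  then obtain as bs where f: "f = set (zip as bs)"
    and bf: "realizes_hintikka I ar MX MY (Suc r) as bs"
    by blast
  then have len: "length as = length bs" unfolding realizes_hintikka_def by simp
  from m obtain c d where "realizes_hintikka I ar MX MY r (as @ [c]) (bs @ [d])"
    and "covers (set (zip (as @ [c]) (bs @ [d]))) m"
    using realizes_hintikka_extend[OF assms(1) bf] len by force
  moreover have "f \<subseteq> set (zip (as @ [c]) (bs @ [d]))"
    unfolding f using len by auto
  ultimately show
    "\<exists>g\<in>{set (zip as bs) | as bs. realizes_hintikka I ar MX MY r as bs}. f \<subseteq> g \<and> covers g m"
    by blast
qed

section \<open>Duality and the main theorem\<close>

fun dual :: "'i fm \<Rightarrow> 'i fm" where
  "dual (Eq a b) = Neg (Eq a b)"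
| "dual (Rel i vs) = Neg (Rel i vs)"
| "dual (Neg \<phi>) = \<phi>"
| "dual (Conj \<phi> \<psi>) = Disj (dual \<phi>) (dual \<psi>)"
| "dual (Disj \<phi> \<psi>) = Conj (dual \<phi>) (dual \<psi>)"
| "dual (All v \<phi>) = Ex v (dual \<phi>)"
| "dual (Ex v \<phi>) = All v (dual \<phi>)"

lemma sat_dual [simp]: "sat M \<nu> (dual \<phi>) \<longleftrightarrow> \<not> sat M \<nu> \<phi>"
  by (induction \<phi> arbitrary: \<nu>) auto

lemma sentence_dual [simp]: "sentence (dual \<phi>) \<longleftrightarrow> sentence \<phi>"
proof -
  have "fv (dual \<phi>) = fv \<phi>" by (induction \<phi>) auto
  then show ?thesis unfolding sentence_def by simp
qed

lemma dual_Pfm: "\<phi> \<in> Pfm I ar \<Longrightarrow> dual \<phi> \<in> Nfm I ar"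
  by (induction rule: Pfm.induct) (auto intro: Nfm.intros)

lemma dual_Nfm: "\<phi> \<in> Nfm I ar \<Longrightarrow> dual \<phi> \<in> Pfm I ar"
  by (induction rule: Nfm.induct) (auto intro: Pfm.intros)

lemma models_dual:
  assumes "sentence \<phi>" and "univ M \<noteq> {}"
  shows "models M (dual \<phi>) \<longleftrightarrow> \<not> models M \<phi>"
proof -
  have "sentence (dual \<phi>)" using assms(1) by simp
  then show ?thesis
    using models_iff_sat[OF assms, of "\<lambda>_. undefined"]
      models_iff_sat[OF _ assms(2), of "dual \<phi>" "\<lambda>_. undefined"] by simp
qed

lemma lll_dual:
  assumes "univ MX \<noteq> {}" and "univ MY \<noteq> {}"
    and GF: "\<And>\<phi>. \<phi> \<in> G \<Longrightarrow> dual \<phi> \<in> F"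
    and "lll F MX MY"
  shows "lll G MY MX"
  unfolding lll_def
proof (intro ballI impI)
  fix \<phi> assume \<phi>: "\<phi> \<in> G" "sentence \<phi>" and "models MY \<phi>"
  show "models MX \<phi>"
  proof (rule ccontr)
    assume "\<not> models MX \<phi>"
    then have "models MX (dual \<phi>)" using models_dual[OF \<phi>(2) assms(1)] by simp
    then have "models MY (dual \<phi>)" using assms(4) GF[OF \<phi>(1)] \<phi>(2) unfolding lll_def by simp
    then show False using models_dual[OF \<phi>(2) assms(2)] \<open>models MY \<phi>\<close> by simp
  qed
qed

lemma lll_Pfm_iff_lll_Nfm:
  assumes "univ MX \<noteq> {}" and "univ MY \<noteq> {}"
  shows "lll (Pfm I ar) MX MY \<longleftrightarrow> lll (Nfm I ar) MY MX"
  using lll_dual[OF assms dual_Nfm] lll_dual[OF assms(2,1) dual_Pfm] by blast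

lemma cond_fin_iff:
  assumes "finite I" and "is_struct I ar MX" and "is_struct I ar MY"
  shows "cond_fin I MX MY \<longleftrightarrow> (\<forall>n. II_wins I n MX MY)"
    and "cond_fin I MX MY \<longleftrightarrow> lll (Pfm I ar) MX MY"
    and "cond_fin I MX MY \<longleftrightarrow> lll (Nfm I ar) MY MX"
proof -
  have ne: "univ MX \<noteq> {}" "univ MY \<noteq> {}"
    using assms(2,3) unfolding is_struct_def by blast+
  have "cond_fin I MX MY \<Longrightarrow> \<forall>n. II_wins I n MX MY"
    using back_and_forth_imp_II_wins[OF ne] cond_fin_iff_back_and_forth by blast
  moreover have "\<forall>n. II_wins I n MX MY \<Longrightarrow> lll (Pfm I ar) MX MY"
    using II_wins_imp_lll_Pfm[OF ne(1)] .
  moreover have "lll (Pfm I ar) MX MY \<Longrightarrow> cond_fin I MX MY"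
    using lll_Pfm_imp_back_and_forth[OF assms(1,2) ne(2)] cond_fin_iff_back_and_forth by blast
  ultimately show "cond_fin I MX MY \<longleftrightarrow> (\<forall>n. II_wins I n MX MY)"
    and "cond_fin I MX MY \<longleftrightarrow> lll (Pfm I ar) MX MY"
    and "cond_fin I MX MY \<longleftrightarrow> lll (Nfm I ar) MY MX"
    using lll_Pfm_iff_lll_Nfm[OF ne] by blast+
qed

lemma equivF_iff_lll: "equivF F MX MY \<longleftrightarrow> lll F MX MY \<and> lll F MY MX"
  unfolding equivF_def lll_def by blast

lemma lll_Un: "lll (F \<union> G) MX MY \<longleftrightarrow> lll F MX MY \<and> lll G MX MY"
  unfolding lll_def by blast

theorem theorem5p1:
  fixes I :: "'i set" and ar :: "'i \<Rightarrow> nat"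
    and MX :: "('a, 'i) lstr" and MY :: "('b, 'i) lstr"
  assumes "finite I"
    and "is_struct I ar MX" and "is_struct I ar MY"
  shows "(cond_fin I MX MY \<longleftrightarrow> (\<forall>n. II_wins I n MX MY)) \<and>
         (cond_fin I MX MY \<longleftrightarrow> lll (Pfm I ar) MX MY) \<and>
         (cond_fin I MX MY \<longleftrightarrow> lll (Nfm I ar) MY MX) \<and>
         ((cond_fin I MX MY \<and> cond_fin I MY MX) \<longleftrightarrow>
            (\<forall>n. II_wins I n MX MY \<and> II_wins I n MY MX)) \<and>
         ((cond_fin I MX MY \<and> cond_fin I MY MX) \<longleftrightarrow> equivF (Pfm I ar) MX MY) \<and>
         ((cond_fin I MX MY \<and> cond_fin I MY MX) \<longleftrightarrow> equivF (Nfm I ar) MX MY) \<and>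
         ((cond_fin I MX MY \<and> cond_fin I MY MX) \<longleftrightarrow> equivF (Pfm I ar \<union> Nfm I ar) MX MY) \<and>
         ((cond_fin I MX MY \<and> cond_fin I MY MX) \<longleftrightarrow> lll (Pfm I ar \<union> Nfm I ar) MX MY)"
  unfolding equivF_iff_lll lll_Un all_conj_distrib
  using cond_fin_iff[OF assms] cond_fin_iff[OF assms(1,3,2)] by blast

end
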